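(* Let $T>0$, $M$ and $N$ be positive integers, $\tau=T/M$, $t_k=k\tau$ ($k=0,\dots,M$), $h=1/N$ and $x_r=rh$ ($r=0,\dots,N$). Let $u:\Omega=[0,1]\times[0,T]\to\mathbb{R}$ be such that $\partial_x^4 u$ is continuous on $\Omega$, and write $u_{k}(x)=u(x,t_{k})$. Let $1<\beta<2$ and $0\le k\le M-1$. For an integer $m\ge 1$ and $\eta>0$ put $c^{\eta}_m=\frac{(m-1)^{\eta}-m^{\eta}}{\eta}$, and set $\nu_h^{\beta}=\frac{h^{2-\beta}}{\Gamma(2-\beta)}$. For $1\le r\le N-1$ define the weights $w^{\beta}_{j,r}$, $j=0,\dots,r$, by \[ w^{\beta}_{j,r}=\tilde w^{\beta}_{j-1,0}-\tilde w^{\beta}_{j,1}, \] where $\tilde w^{\beta}_{-1,0}=0$, $\tilde w^{\beta}_{r,1}=0$, and for $\rho\in\{0,1\}$ and $m=1,\dots,r$, \[ \tilde w^{\beta}_{r-m,\rho}=c^{3-\beta}_{m}-(m-\rho)\,c^{2-\beta}_{m}. \] (Equivalently: $w^{\beta}_{0,r}=-\big(c^{3-\beta}_r-(r-1)c^{2-\beta}_r\big)$, $w^{\beta}_{r,r}=c^{3-\beta}_1-c^{2-\beta}_1$, and for $1\le j\le r-1$, $w^{\beta}_{j,r}=\big(c^{3-\beta}_{r-j+1}-(r-j+1)c^{2-\beta}_{r-j+1}\big)-\big(c^{3-\beta}_{r-j}-(r-j-1)c^{2-\beta}_{r-j}\big)$.) Then for $r=1,\dots,N-1$, \[ D_x^{\beta}u_{k+1}(x_r)=\nu_h^{\beta}\sum_{j=0}^{r}w^{\beta}_{j,r}\,u_{k+1}''(x_j)+R_h^{\beta}(r),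 \] where the remainder satisfies \[ \|R_h^{\beta}\|_{\infty}\le\frac{h^{2}\mathcal{M}_u}{8\,\Gamma(3-\beta)},\qquad \mathcal{M}_u=\sup_{(x,t)\in\Omega}\Big|\frac{\partial^4 u}{\partial x^4}(x,t)\Big|. \]
   Context: For $1<\beta<2$, the Caputo derivative in $x$ is $D_x^{\beta}f(x)=\frac{1}{\Gamma(2-\beta)}\int_0^{x}(x-s)^{1-\beta}f''(s)\,ds$ for $x>0$. Here $u_{k+1}''$ denotes the second derivative of $x\mapsto u(x,t_{k+1})$, and $\|R_h^\beta\|_\infty$ denotes the maximum of $|R_h^\beta(r)|$ over $r=1,\dots,N-1$. *)

theory Defs
  imports "HOL-Analysis.Analysis"
begin

text \<open>Caputo derivative of order beta (1 < beta < 2) at x > 0 of a function whose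
  second derivative is f2:  1/Gamma(2-beta) * integral_0^x (x-s)^(1-beta) f2(s) ds.\<close>
definition caputo :: "real \<Rightarrow> (real \<Rightarrow> real) \<Rightarrow> real \<Rightarrow> real" where
  "caputo \<beta> f2 x = (1 / Gamma (2 - \<beta>)) * integral {0..x} (\<lambda>s. (x - s) powr (1 - \<beta>) * f2 s)"

definition cco :: "real \<Rightarrow> nat \<Rightarrow> real" where
  "cco \<eta> m = ((real m - 1) powr \<eta> - real m powr \<eta>) / \<eta>"

text \<open>tilde w^beta_{i,rho} (for fixed r), with i = r - m, m = 1..r; zero outside 0 <= i < r
  (this encodes tilde w_{-1,0} = 0 and tilde w_{r,1} = 0).\<close>
definition wtil :: "real \<Rightarrow> nat \<Rightarrow> int \<Rightarrow> real \<Rightarrow> real" where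
  "wtil \<beta> r i \<rho> =
     (if 0 \<le> i \<and> i < int r then
        (let m = nat (int r - i) in cco (3 - \<beta>) m - (real m - \<rho>) * cco (2 - \<beta>) m)
      else 0)"

definition wgt :: "real \<Rightarrow> nat \<Rightarrow> nat \<Rightarrow> real" where
  "wgt \<beta> j r = wtil \<beta> r (int j - 1) 0 - wtil \<beta> r (int j) 1"

end

theory Submission
  imports Defs
begin

text \<open>On each grid cell the second derivative \<open>u''(\<cdot>, t\<^sub>k\<^sub>+\<^sub>1)\<close> is replaced by its linear
  interpolant. Integrating the Caputo kernel \<open>(x\<^sub>r - s)\<^bsup>1-\<beta>\<^esup>\<close> exactly against the
  interpolant gives precisely the weights \<open>w\<^sup>\<beta>\<^sub>j\<^sub>,\<^sub>r\<close> (after an Abel summation regrouping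
  the two endpoint contributions of each cell). The interpolation error is at most
  \<open>h\<^sup>2/8 \<cdot> sup \<bar>\<partial>\<^sub>x\<^sup>4 u\<bar>\<close>, the kernel has integral \<open>x\<^sub>r\<^bsup>2-\<beta>\<^esup> / (2 - \<beta>) \<le> 1 / (2 - \<beta>)\<close>, and
  \<open>(2 - \<beta>) \<Gamma>(2 - \<beta>) = \<Gamma>(3 - \<beta>)\<close>.\<close>

lemma abs_node_polynomial_le:
  fixes a b s :: real
  assumes "a \<le> s" "s \<le> b"
  shows "\<bar>(s - a) * (s - b)\<bar> \<le> (b - a)^2 / 4"
proof -
  have "(b - a)^2 - 4 * ((s - a) * (b - s)) = (2 * s - a - b)^2"
    by (simp add: power2_eq_square algebra_simps)
  moreover have "\<bar>(s - a) * (s - b)\<bar> = (s - a) * (b - s)"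
    using assms by (simp add: abs_mult)
  ultimately show ?thesis using zero_le_power2[of "2 * s - a - b"] by linarith
qed

lemma linear_interpolation_error:
  fixes f f' f'' :: "real \<Rightarrow> real"
  assumes ab: "a < b"
    and f: "\<And>x. x \<in> {a..b} \<Longrightarrow> (f has_real_derivative f' x) (at x within {a..b})"
    and f': "\<And>x. x \<in> {a..b} \<Longrightarrow> (f' has_real_derivative f'' x) (at x within {a..b})"
    and f'': "\<And>x. x \<in> {a..b} \<Longrightarrow> \<bar>f'' x\<bar> \<le> K"
    and s: "s \<in> {a..b}"
  shows "\<bar>f s - (f a * (b - s) + f b * (s - a)) / (b - a)\<bar> \<le> K * (b - a)^2 / 8"
proof (cases "s = a \<or> s = b")
  case True
  have "0 \<le> K" using f''[of a] ab by force
  moreover have "f s - (f a * (b - s) + f b * (s - a)) / (b - a) = 0"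
    using True ab by (auto simp: field_simps)
  ultimately show ?thesis by simp
next
  case False
  with s have sa: "a < s" and sb: "s < b" by auto
  define L where "L y = (f a * (b - y) + f b * (y - a)) / (b - a)" for y
  define C where "C = (f s - L s) / ((s - a) * (s - b))"
  \<comment> \<open>\<open>g\<close> vanishes at \<open>a\<close>, \<open>s\<close> and \<open>b\<close>, so Rolle twice yields a zero of \<open>g'' = f'' - 2 C\<close>.\<close>
  define g where "g y = f y - L y - C * ((y - a) * (y - b))" for y
  define g' where "g' y = f' y - (f b - f a) / (b - a) - C * (2 * y - a - b)" for y
  have interior: "x \<in> {a..b}" "at x within {a..b} = at x" if "a < x" "x < b" for x
    using that at_within_Icc_at by auto
  have dg: "(g has_real_derivative g' x) (at x)" if "a < x" "x < b" for x
    using f[OF interior(1)[OF that]] ab unfolding interior(2)[OF that] g_def g'_def L_def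
    by (auto intro!: derivative_eq_intros simp: divide_simps)
  have dg': "(g' has_real_derivative (f'' x - 2 * C)) (at x)" if "a < x" "x < b" for x
    using f'[OF interior(1)[OF that]] unfolding interior(2)[OF that] g'_def
    by (auto intro!: derivative_eq_intros)
  have cf: "continuous_on {a..b} f" and cf': "continuous_on {a..b} f'"
    unfolding continuous_on_eq_continuous_within using f f' by (blast intro: DERIV_continuous)+
  have cg: "continuous_on {a..b} g" unfolding g_def L_def using ab by (intro continuous_intros cf) auto
  have cg': "continuous_on {a..b} g'" unfolding g'_def by (intro continuous_intros cf')
  have "g a = 0" "g b = 0" using ab by (simp_all add: g_def L_def)
  moreover have "g s = 0" using sa sb by (simp add: g_def C_def)
  ultimately obtain z1 z2 where z: "a < z1" "z1 < s" "s < z2" "z2 < b"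
    and "(g has_real_derivative 0) (at z1)" "(g has_real_derivative 0) (at z2)"
    using Rolle[of a s g] Rolle[of s b g] sa sb continuous_on_subset[OF cg] dg
    by (simp add: real_differentiable_def) (meson less_trans)
  then have "g' z1 = 0" "g' z2 = 0" using DERIV_unique dg sa sb by (meson less_trans)+
  then obtain z where z_between: "z1 < z" "z < z2" and g'_crit: "(g' has_real_derivative 0) (at z)"
    using Rolle[of z1 z2 g'] z continuous_on_subset[OF cg', of "{z1..z2}"] dg'
    by (auto simp: real_differentiable_def) (meson less_trans)
  then have "f'' z = 2 * C" using DERIV_unique[OF dg' g'_crit] z by simp
  with z z_between have C_bound: "\<bar>C\<bar> \<le> K / 2" using f''[of z] by auto
  have "\<bar>f s - L s\<bar> = \<bar>C\<bar> * \<bar>(s - a) * (s - b)\<bar>"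
    using sa sb by (simp add: C_def abs_mult)
  also have "\<dots> \<le> K / 2 * ((b - a)^2 / 4)"
    using C_bound abs_node_polynomial_le[of a s b] sa sb by (intro mult_mono) auto
  finally show ?thesis by (simp add: L_def)
qed

lemma has_integral_powr_kernel_affine:
  fixes X a b p \<alpha> \<gamma> :: real
  assumes ab: "a \<le> b" and bX: "b \<le> X" and p: "0 < p"
  defines "G \<equiv> \<lambda>s. \<gamma> * (X - s) powr (p + 1) / (p + 1) - (\<alpha> + \<gamma> * X) * (X - s) powr p / p"
  shows "((\<lambda>s. (X - s) powr (p - 1) * (\<alpha> + \<gamma> * s)) has_integral G b - G a) {a..b}"
proof (rule fundamental_theorem_of_calculus_interior[OF ab])
  show "continuous_on {a..b} G" unfolding G_def
    using bX p by (intro continuous_intros continuous_on_powr') auto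
next
  fix x assume "x \<in> {a<..<b}"
  then have xX: "0 < X - x" using bX by auto
  have d: "((\<lambda>s. (X - s) powr q) has_real_derivative - q * (X - x) powr (q - 1)) (at x)" for q
    using DERIV_fun_powr[of "\<lambda>s. X - s" "-1" x q] xX by (auto intro!: derivative_eq_intros)
  have G_eq: "G = (\<lambda>s. \<gamma> / (p + 1) * (X - s) powr (p + 1) - (\<alpha> + \<gamma> * X) / p * (X - s) powr p)"
    by (simp add: G_def fun_eq_iff)
  have powr_eq: "(X - x) powr (p + 1 - 1) = (X - x) powr (p - 1) * (X - x)"
    using powr_add[of "X - x" "p - 1" 1] xX by simp
  have cancel: "c / (p + 1) * (- (p + 1) * z) = - c * z" "c / p * (- p * z) = - c * z" for c z
    using p by (simp_all add: field_simps)
  have derivative_eq: "\<gamma> / (p + 1) * (- (p + 1) * (X - x) powr (p + 1 - 1))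
      - (\<alpha> + \<gamma> * X) / p * (- p * (X - x) powr (p - 1)) = (X - x) powr (p - 1) * (\<alpha> + \<gamma> * x)"
    unfolding cancel powr_eq by (simp add: algebra_simps)
  have "((\<lambda>s. \<gamma> / (p + 1) * (X - s) powr (p + 1) - (\<alpha> + \<gamma> * X) / p * (X - s) powr p)
      has_real_derivative \<gamma> / (p + 1) * (- (p + 1) * (X - x) powr (p + 1 - 1))
        - (\<alpha> + \<gamma> * X) / p * (- p * (X - x) powr (p - 1))) (at x)"
    by (intro DERIV_diff DERIV_cmult d)
  then show "(G has_vector_derivative (X - x) powr (p - 1) * (\<alpha> + \<gamma> * x)) (at x)"
    unfolding G_eq derivative_eq has_real_derivative_iff_has_vector_derivative .
qed

lemma has_integral_powr_kernel_interpolant: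
  fixes X a b h p fa fb :: real and m :: nat
  assumes h: "0 < h" and p: "0 < p" and m: "1 \<le> m"
    and a: "X - a = real m * h" and b: "X - b = (real m - 1) * h"
  shows "((\<lambda>s. (X - s) powr (p - 1) * ((fa * (b - s) + fb * (s - a)) / h)) has_integral
     h powr p * (fb * (cco (p + 1) m - real m * cco p m) - fa * (cco (p + 1) m - (real m - 1) * cco p m)))
     {a..b}"
proof -
  define \<alpha> where "\<alpha> = (fa * b - fb * a) / h"
  define \<gamma> where "\<gamma> = (fb - fa) / h"
  have "b - a = h" "0 \<le> (real m - 1) * h" using a b h m by (simp_all add: algebra_simps)
  then have ab: "a \<le> b" and bX: "b \<le> X" using b h by linarith+
  have affine: "(fa * (b - s) + fb * (s - a)) / h = \<alpha> + \<gamma> * s" for s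
    using h by (simp add: \<alpha>_def \<gamma>_def field_simps)
  have "b = a + h" "X = a + real m * h" using a b by (simp_all add: algebra_simps)
  then have affine_X: "\<alpha> + \<gamma> * X = fb * real m - fa * (real m - 1)"
    using h by (simp add: \<alpha>_def \<gamma>_def field_simps)
  have Bb: "\<gamma> * (X - b) powr (p + 1) = (fb - fa) * h powr p * (real m - 1) powr (p + 1)"
    and Ba: "\<gamma> * (X - a) powr (p + 1) = (fb - fa) * h powr p * real m powr (p + 1)"
    and Ab: "(X - b) powr p = h powr p * (real m - 1) powr p"
    and Aa: "(X - a) powr p = h powr p * real m powr p"
    using a b h m by (simp_all add: \<gamma>_def powr_mult powr_add)
  have "\<gamma> * (X - b) powr (p + 1) / (p + 1) - (\<alpha> + \<gamma> * X) * (X - b) powr p / p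
      - (\<gamma> * (X - a) powr (p + 1) / (p + 1) - (\<alpha> + \<gamma> * X) * (X - a) powr p / p)
    = h powr p * ((fb - fa) * cco (p + 1) m - (fb * real m - fa * (real m - 1)) * cco p m)"
    unfolding affine_X Ba Bb Aa Ab cco_def by (simp add: divide_inverse algebra_simps)
  also have "\<dots> = h powr p * (fb * (cco (p + 1) m - real m * cco p m)
      - fa * (cco (p + 1) m - (real m - 1) * cco p m))"
    by (simp add: algebra_simps)
  finally show ?thesis
    using has_integral_powr_kernel_affine[OF ab bX p, of \<alpha> \<gamma>] by (simp add: affine)
qed

lemma wtil_eq:
  assumes "j < r"
  shows "wtil \<beta> r (int j) \<rho> = cco (3 - \<beta>) (r - j) - (real (r - j) - \<rho>) * cco (2 - \<beta>) (r - j)"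
  using assms by (simp add: wtil_def Let_def nat_diff_distrib)

lemma sum_wgt_eq_sum_wtil:
  fixes F :: "nat \<Rightarrow> real"
  shows "(\<Sum>j = 0..r. wgt \<beta> j r * F j)
       = (\<Sum>j<r. F (Suc j) * wtil \<beta> r (int j) 0 - F j * wtil \<beta> r (int j) 1)"
proof -
  have "(\<Sum>j = 0..r. wgt \<beta> j r * F j)
      = (\<Sum>j<Suc r. wtil \<beta> r (int j - 1) 0 * F j) - (\<Sum>j<Suc r. wtil \<beta> r (int j) 1 * F j)"
    by (simp add: wgt_def atLeast0AtMost lessThan_Suc_atMost[symmetric] sum_subtractf left_diff_distrib)
  also have "(\<Sum>j<Suc r. wtil \<beta> r (int j - 1) 0 * F j) = (\<Sum>j<r. wtil \<beta> r (int j) 0 * F (Suc j))"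
    by (subst sum.lessThan_Suc_shift) (simp add: wtil_def)
  also have "(\<Sum>j<Suc r. wtil \<beta> r (int j) 1 * F j) = (\<Sum>j<r. wtil \<beta> r (int j) 1 * F j)"
    by (simp add: wtil_def)
  finally show ?thesis by (simp add: sum_subtractf mult.commute)
qed

lemma has_integral_weighted_perturbation:
  fixes f g w :: "real \<Rightarrow> real"
  assumes I: "((\<lambda>s. w s * g s) has_integral I) {a..b}" and W: "(w has_integral W) {a..b}"
    and w_nonneg: "\<And>s. s \<in> {a..b} \<Longrightarrow> 0 \<le> w s"
    and cont: "continuous_on {a..b} (\<lambda>s. f s - g s)"
    and close: "\<And>s. s \<in> {a..b} \<Longrightarrow> \<bar>f s - g s\<bar> \<le> C"
  obtains J where "((\<lambda>s. w s * f s) has_integral J) {a..b}" and "\<bar>J - I\<bar> \<le> C * W"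
proof -
  have "w absolutely_integrable_on {a..b}"
    using W w_nonneg by (intro nonnegative_absolutely_integrable_1) auto
  then have "(\<lambda>s. (f s - g s) * w s) absolutely_integrable_on {a..b}"
    by (intro absolutely_integrable_bounded_measurable_product_real
          continuous_imp_measurable_on_sets_lebesgue[OF cont]
          compact_imp_bounded compact_continuous_image[OF cont]) auto
  then have E: "((\<lambda>s. (f s - g s) * w s) has_integral integral {a..b} (\<lambda>s. (f s - g s) * w s)) {a..b}"
    by (simp add: absolutely_integrable_on_def has_integral_integral)
  have "norm (integral {a..b} (\<lambda>s. (f s - g s) * w s)) \<le> integral {a..b} (\<lambda>s. C * w s)"
    using E has_integral_mult_right[OF W, of C] close w_nonneg
    by (intro integral_norm_bound_integral) (auto simp: abs_mult intro: mult_right_mono)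
  also have "integral {a..b} (\<lambda>s. C * w s) = C * W"
    using has_integral_mult_right[OF W] by (rule integral_unique)
  finally have "\<bar>integral {a..b} (\<lambda>s. (f s - g s) * w s)\<bar> \<le> C * W" by simp
  moreover have "((\<lambda>s. w s * f s) has_integral I + integral {a..b} (\<lambda>s. (f s - g s) * w s)) {a..b}"
    using has_integral_add[OF I E] by (simp add: algebra_simps)
  ultimately show ?thesis using that by force
qed

lemma has_integral_grid_cells:
  fixes g :: "real \<Rightarrow> 'a::banach"
  assumes h: "0 \<le> h"
    and cells: "\<And>j. j < n \<Longrightarrow> (g has_integral I j) {real j * h .. real (Suc j) * h}"
  shows "(g has_integral (\<Sum>j<n. I j)) {0 .. real n * h}"
  using cells
proof (induction n)
  case 0
  then show ?case by (simp add: has_integral_refl(2))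
next
  case (Suc n)
  have "0 \<le> real n * h" "real n * h \<le> real (Suc n) * h" using h by (simp_all add: mult_right_mono)
  from has_integral_combine[OF this Suc.IH Suc.prems[of n]] Suc.prems show ?case by simp
qed

lemma caputo_kernel_cell_error:
  fixes f :: "real \<Rightarrow> real" and \<beta> h C :: real and j r :: nat
  assumes beta: "1 < \<beta>" "\<beta> < 2" and h: "0 < h" and j: "j < r"
    and cont: "continuous_on {real j * h .. real (Suc j) * h} f"
    and interp: "\<And>s. s \<in> {real j * h .. real (Suc j) * h} \<Longrightarrow>
      \<bar>f s - (f (real j * h) * (real (Suc j) * h - s) + f (real (Suc j) * h) * (s - real j * h)) / h\<bar> \<le> C"
  obtains J where
    "((\<lambda>s. (real r * h - s) powr (1 - \<beta>) * f s) has_integral J) {real j * h .. real (Suc j) * h}"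
    and "\<bar>J - h powr (2 - \<beta>) * (f (real (Suc j) * h) * wtil \<beta> r (int j) 0
            - f (real j * h) * wtil \<beta> r (int j) 1)\<bar>
      \<le> C * (((real r * h - real j * h) powr (2 - \<beta>)
            - (real r * h - real (Suc j) * h) powr (2 - \<beta>)) / (2 - \<beta>))"
proof -
  define a where "a = real j * h"
  define b where "b = real (Suc j) * h"
  define X where "X = real r * h"
  have p: "0 < 2 - \<beta>" "2 - \<beta> - 1 = 1 - \<beta>" "2 - \<beta> + 1 = 3 - \<beta>" using beta by auto
  have m: "1 \<le> r - j" "X - a = real (r - j) * h" "X - b = (real (r - j) - 1) * h"
    using j by (auto simp: X_def a_def b_def algebra_simps)
  have ab: "a \<le> b" "b \<le> X" using j h by (auto simp: a_def b_def X_def intro!: mult_right_mono)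
  have "((\<lambda>s. (X - s) powr (1 - \<beta>) * ((f a * (b - s) + f b * (s - a)) / h)) has_integral
      h powr (2 - \<beta>) * (f b * wtil \<beta> r (int j) 0 - f a * wtil \<beta> r (int j) 1)) {a..b}"
    using has_integral_powr_kernel_interpolant[OF h p(1) m, of "f a" "f b"] j
    by (simp add: wtil_eq p)
  moreover have "((\<lambda>s. (X - s) powr (1 - \<beta>)) has_integral
      ((X - a) powr (2 - \<beta>) - (X - b) powr (2 - \<beta>)) / (2 - \<beta>)) {a..b}"
    using has_integral_powr_kernel_affine[OF ab p(1), of 1 0] by (simp add: p diff_divide_distrib)
  moreover have "0 \<le> (X - s) powr (1 - \<beta>)" for s by simp
  moreover have "continuous_on {a..b} (\<lambda>s. f s - (f a * (b - s) + f b * (s - a)) / h)"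
    using cont h unfolding a_def b_def by (intro continuous_intros) auto
  moreover have "\<bar>f s - (f a * (b - s) + f b * (s - a)) / h\<bar> \<le> C" if "s \<in> {a..b}" for s
    using interp that by (simp add: a_def b_def)
  ultimately obtain J where "((\<lambda>s. (X - s) powr (1 - \<beta>) * f s) has_integral J) {a..b}"
    "\<bar>J - h powr (2 - \<beta>) * (f b * wtil \<beta> r (int j) 0 - f a * wtil \<beta> r (int j) 1)\<bar>
      \<le> C * (((X - a) powr (2 - \<beta>) - (X - b) powr (2 - \<beta>)) / (2 - \<beta>))"
    by (rule has_integral_weighted_perturbation)
  then show ?thesis using that unfolding a_def b_def X_def by blast
qed

lemma caputo_linear_product_integration_error:
  fixes f :: "real \<Rightarrow> real" and \<beta> h C :: real and r :: nat
  assumes beta: "1 < \<beta>" "\<beta> < 2" and h: "0 < h"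
    and cont: "continuous_on {0..real r * h} f"
    and interp: "\<And>j s. j < r \<Longrightarrow> s \<in> {real j * h .. real (Suc j) * h} \<Longrightarrow>
      \<bar>f s - (f (real j * h) * (real (Suc j) * h - s) + f (real (Suc j) * h) * (s - real j * h)) / h\<bar> \<le> C"
  shows "\<bar>caputo \<beta> f (real r * h)
      - (h powr (2 - \<beta>) / Gamma (2 - \<beta>)) * (\<Sum>j = 0..r. wgt \<beta> j r * f (real j * h))\<bar>
    \<le> C * (real r * h) powr (2 - \<beta>) / Gamma (3 - \<beta>)"
proof -
  define p where "p = 2 - \<beta>"
  define X where "X = real r * h"
  define w where "w = (\<lambda>s. (X - s) powr (1 - \<beta>))"
  define Q where "Q j = h powr p * (f (real (Suc j) * h) * wtil \<beta> r (int j) 0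
      - f (real j * h) * wtil \<beta> r (int j) 1)" for j
  define W where "W j = ((X - real j * h) powr p - (X - real (Suc j) * h) powr p) / p" for j
  have p: "0 < p" "p - 1 = 1 - \<beta>" using beta by (auto simp: p_def)
  have cell_bounds: "real j * h \<le> real (Suc j) * h" "real (Suc j) * h \<le> X" if "j < r" for j
    using that h by (auto simp: X_def intro!: mult_right_mono)
  have "\<exists>J. ((\<lambda>s. w s * f s) has_integral J) {real j * h .. real (Suc j) * h}
      \<and> \<bar>J - Q j\<bar> \<le> C * W j" if j: "j < r" for j
  proof -
    have "continuous_on {real j * h .. real (Suc j) * h} f"
      using cell_bounds[OF j] h by (intro continuous_on_subset[OF cont]) (auto simp: X_def)
    then obtain J where
      "((\<lambda>s. (real r * h - s) powr (1 - \<beta>) * f s) has_integral J) {real j * h .. real (Suc j) * h}"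
      "\<bar>J - h powr (2 - \<beta>) * (f (real (Suc j) * h) * wtil \<beta> r (int j) 0
            - f (real j * h) * wtil \<beta> r (int j) 1)\<bar>
      \<le> C * (((real r * h - real j * h) powr (2 - \<beta>)
            - (real r * h - real (Suc j) * h) powr (2 - \<beta>)) / (2 - \<beta>))"
      by (rule caputo_kernel_cell_error[OF beta h j _ interp[OF j]])
    then show ?thesis unfolding w_def Q_def W_def X_def p_def by blast
  qed
  then obtain J where J: "\<And>j. j < r \<Longrightarrow> ((\<lambda>s. w s * f s) has_integral J j) {real j * h .. real (Suc j) * h}"
    and J_close: "\<And>j. j < r \<Longrightarrow> \<bar>J j - Q j\<bar> \<le> C * W j"
    using choice_iff'[where P = "\<lambda>j. j < r"] by (metis (no_types, lifting))
  have "(w has_integral (\<Sum>j<r. W j)) {0..X}"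
    unfolding X_def using h
  proof (intro has_integral_grid_cells)
    show "(w has_integral W j) {real j * h .. real (Suc j) * h}" if "j < r" for j
      using has_integral_powr_kernel_affine[OF cell_bounds[OF that] p(1), of 1 0]
      by (simp add: w_def W_def X_def p diff_divide_distrib)
  qed auto
  moreover have "(w has_integral X powr p / p) {0..X}"
    using has_integral_powr_kernel_affine[of 0 X X p 1 0] h p by (simp add: w_def X_def)
  ultimately have W_sum: "(\<Sum>j<r. W j) = X powr p / p"
    by (rule has_integral_unique)
  have "((\<lambda>s. w s * f s) has_integral (\<Sum>j<r. J j)) {0..X}"
    unfolding X_def using h J by (intro has_integral_grid_cells) auto
  then have caputo_eq: "caputo \<beta> f X = (\<Sum>j<r. J j) / Gamma p"
    by (simp add: caputo_def w_def p_def[symmetric] integral_unique)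
  have "\<bar>(\<Sum>j<r. J j) - (\<Sum>j<r. Q j)\<bar> \<le> (\<Sum>j<r. C * W j)"
    unfolding sum_subtractf[symmetric] by (rule order_trans[OF sum_abs sum_mono]) (use J_close in auto)
  also have "\<dots> = C * X powr p / p"
    by (simp add: sum_distrib_left[symmetric] W_sum)
  finally have err: "\<bar>(\<Sum>j<r. J j) - (\<Sum>j<r. Q j)\<bar> \<le> C * X powr p / p" .
  have "(\<Sum>j<r. Q j) = h powr p * (\<Sum>j = 0..r. wgt \<beta> j r * f (real j * h))"
    by (simp add: Q_def sum_wgt_eq_sum_wtil sum_distrib_left)
  then have "caputo \<beta> f (real r * h)
      - (h powr (2 - \<beta>) / Gamma (2 - \<beta>)) * (\<Sum>j = 0..r. wgt \<beta> j r * f (real j * h))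
      = ((\<Sum>j<r. J j) - (\<Sum>j<r. Q j)) / Gamma p"
    by (simp add: caputo_eq X_def[symmetric] p_def[symmetric] diff_divide_distrib)
  moreover have "Gamma (3 - \<beta>) = p * Gamma p"
    using Gamma_plus1[of p] p nonpos_Ints_nonpos[of p] by (force simp: p_def)
  ultimately show ?thesis
    using divide_right_mono[OF err, of "Gamma p"] Gamma_real_pos[OF p(1)]
    by (simp add: abs_div X_def p_def[symmetric])
qed

lemma continuous_abs_le_SUP:
  fixes g :: "'a::topological_space \<Rightarrow> real"
  assumes "compact S" "continuous_on S g" "x \<in> S"
  shows "\<bar>g x\<bar> \<le> (SUP y\<in>S. \<bar>g y\<bar>)"
proof -
  have "compact ((\<lambda>y. \<bar>g y\<bar>) ` S)"
    using assms by (intro compact_continuous_image continuous_intros)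
  then show ?thesis
    using assms(3) by (intro cSUP_upper bounded_imp_bdd_above compact_imp_bounded)
qed

lemma caputo_linear_product_integration_error_unit_interval:
  fixes f f' f'' :: "real \<Rightarrow> real" and \<beta> h K :: real and r :: nat
  assumes beta: "1 < \<beta>" "\<beta> < 2" and h: "0 < h" and rh: "real r * h \<le> 1"
    and f: "\<And>x. x \<in> {0..1} \<Longrightarrow> (f has_real_derivative f' x) (at x within {0..1})"
    and f': "\<And>x. x \<in> {0..1} \<Longrightarrow> (f' has_real_derivative f'' x) (at x within {0..1})"
    and f'': "\<And>x. x \<in> {0..1} \<Longrightarrow> \<bar>f'' x\<bar> \<le> K"
  shows "\<bar>caputo \<beta> f (real r * h)
      - (h powr (2 - \<beta>) / Gamma (2 - \<beta>)) * (\<Sum>j = 0..r. wgt \<beta> j r * f (real j * h))\<bar>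
    \<le> h^2 * K / (8 * Gamma (3 - \<beta>))"
proof -
  have "continuous_on {0..1} f"
    unfolding continuous_on_eq_continuous_within using f by (blast intro: DERIV_continuous)
  then have "continuous_on {0..real r * h} f"
    by (rule continuous_on_subset) (use rh in auto)
  then have "\<bar>caputo \<beta> f (real r * h)
      - (h powr (2 - \<beta>) / Gamma (2 - \<beta>)) * (\<Sum>j = 0..r. wgt \<beta> j r * f (real j * h))\<bar>
    \<le> K * h^2 / 8 * (real r * h) powr (2 - \<beta>) / Gamma (3 - \<beta>)"
  proof (rule caputo_linear_product_integration_error[OF beta h])
    fix j s assume j: "j < r" and s: "s \<in> {real j * h .. real (Suc j) * h}"
    have "real (Suc j) * h \<le> real r * h" using j h by (simp add: mult_right_mono)
    with rh have "real (Suc j) * h \<le> 1" by linarith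
    moreover have "0 \<le> x" if "real j * h \<le> x" for x
      using that h by (meson mult_nonneg_nonneg of_nat_0_le_iff order_trans less_imp_le)
    ultimately have "\<bar>f s - (f (real j * h) * (real (Suc j) * h - s) + f (real (Suc j) * h) * (s - real j * h))
        / (real (Suc j) * h - real j * h)\<bar> \<le> K * (real (Suc j) * h - real j * h)^2 / 8"
      using h s
      by (intro linear_interpolation_error[where f' = f' and f'' = f''] DERIV_subset[OF f]
            DERIV_subset[OF f'] f'') auto
    then show "\<bar>f s - (f (real j * h) * (real (Suc j) * h - s)
        + f (real (Suc j) * h) * (s - real j * h)) / h\<bar> \<le> K * h^2 / 8"
      by (simp add: algebra_simps)
  qed
  also have "\<dots> \<le> h^2 * K / (8 * Gamma (3 - \<beta>))"
  proof -
    have "0 \<le> K" using f''[of 0] by simp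
    moreover have "(real r * h) powr (2 - \<beta>) \<le> 1" using rh h beta by (intro powr_le1) auto
    ultimately have "K * h^2 / 8 * (real r * h) powr (2 - \<beta>) \<le> K * h^2 / 8"
      by (intro mult_left_le) auto
    moreover have "0 < Gamma (3 - \<beta>)" using beta by (intro Gamma_real_pos) simp
    ultimately show ?thesis by (simp add: ac_simps divide_right_mono)
  qed
  finally show ?thesis .
qed

theorem theorem5p1:
  fixes T \<beta> :: real and M N k :: nat
    and u u1 u2 u3 u4 :: "real \<Rightarrow> real \<Rightarrow> real"
  assumes T_pos: "T > 0" and M_pos: "M \<ge> 1" and N_pos: "N \<ge> 1"
    and beta: "1 < \<beta>" "\<beta> < 2"
    and k: "k \<le> M - 1"
    and d1: "\<And>x t. x \<in> {0..1} \<Longrightarrow> t \<in> {0..T} \<Longrightarrow>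
               ((\<lambda>y. u y t) has_real_derivative u1 x t) (at x within {0..1})"
    and d2: "\<And>x t. x \<in> {0..1} \<Longrightarrow> t \<in> {0..T} \<Longrightarrow>
               ((\<lambda>y. u1 y t) has_real_derivative u2 x t) (at x within {0..1})"
    and d3: "\<And>x t. x \<in> {0..1} \<Longrightarrow> t \<in> {0..T} \<Longrightarrow>
               ((\<lambda>y. u2 y t) has_real_derivative u3 x t) (at x within {0..1})"
    and d4: "\<And>x t. x \<in> {0..1} \<Longrightarrow> t \<in> {0..T} \<Longrightarrow>
               ((\<lambda>y. u3 y t) has_real_derivative u4 x t) (at x within {0..1})"
    and cont4: "continuous_on ({0..1} \<times> {0..T}) (\<lambda>p. u4 (fst p) (snd p))"
  shows "\<forall>r \<in> {1..N-1}.
     \<bar>caputo \<beta> (\<lambda>x. u2 x (real (k+1) * (T / real M))) (real r * (1 / real N))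
       - ((1 / real N) powr (2 - \<beta>) / Gamma (2 - \<beta>)) *
         (\<Sum>j = 0..r. wgt \<beta> j r * u2 (real j * (1 / real N)) (real (k+1) * (T / real M)))\<bar>
     \<le> (1 / real N)^2 * (SUP p \<in> {0..1} \<times> {0..T}. \<bar>u4 (fst p) (snd p)\<bar>) / (8 * Gamma (3 - \<beta>))"
proof
  fix r assume r: "r \<in> {1..N-1}"
  define h where "h = 1 / real N"
  define t where "t = real (k+1) * (T / real M)"
  have h: "0 < h" using N_pos by (simp add: h_def)
  have "r \<le> N" using r by auto
  then have rh: "real r * h \<le> 1" using N_pos by (simp add: h_def field_simps)
  have "real (k + 1) * (T / real M) \<le> real M * (T / real M)"
    using k M_pos T_pos by (intro mult_right_mono) auto
  then have t: "t \<in> {0..T}" using M_pos T_pos by (simp add: t_def)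
  have "\<bar>u4 x t\<bar> \<le> (SUP p \<in> {0..1} \<times> {0..T}. \<bar>u4 (fst p) (snd p)\<bar>)" if "x \<in> {0..1}" for x
    using continuous_abs_le_SUP[OF _ cont4, of "(x, t)"] that t by (simp add: compact_Times)
  with d3 d4 t show "\<bar>caputo \<beta> (\<lambda>x. u2 x (real (k+1) * (T / real M))) (real r * (1 / real N))
       - ((1 / real N) powr (2 - \<beta>) / Gamma (2 - \<beta>)) *
         (\<Sum>j = 0..r. wgt \<beta> j r * u2 (real j * (1 / real N)) (real (k+1) * (T / real M)))\<bar>
     \<le> (1 / real N)^2 * (SUP p \<in> {0..1} \<times> {0..T}. \<bar>u4 (fst p) (snd p)\<bar>) / (8 * Gamma (3 - \<beta>))"
    unfolding h_def[symmetric] t_def[symmetric]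
    by (intro caputo_linear_product_integration_error_unit_interval[OF beta h rh])
qed

end
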